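(* Let $S,T$ be totally ordered sets and $M\colon S\times T\to\mathbf{Vec}$ pointwise finite-dimensional and middle exact. Let $s\in S$, $t\in T$, and let $J_S\subseteq S$, $J_T\subseteq T$ be intervals. (1) Suppose some element of $T\setminus J_T$ is an upper bound of $J_T$. Then every monomorphism $h\colon k_{\{s\}\times J_T}\hookrightarrow M|_{\{s\}\times T}$ (of modules over $\{s\}\times T$) extends to a monomorphism $k_{(-\infty,s]\times J_T}\hookrightarrow M|_{(-\infty,s]\times T}$ (of modules over $(-\infty,s]\times T$) whose restriction to $\{s\}\times T$ is $h$. (2) Suppose some element of $S\setminus J_S$ is an upper bound of $J_S$. Then every monomorphism $h\colon k_{J_S\times\{t\}}\hookrightarrow M|_{S\times\{t\}}$ extends to a monomorphism $k_{J_S\times(-\infty,t]}\hookrightarrow M|_{S\times(-\infty,t]}$ whose restriction to $S\times\{t\}$ is $h$.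
   Context: $S\times T$ has the product order. $(-\infty,s]=\{r\in S:r\le s\}$, similarly in $T$. $M$ is middle exact if for all $x\le x'$ in $S$, $y\le y'$ in $T$, with $a=(x,y)$, $b=(x,y')$, $c=(x',y)$, $d=(x',y')$, the sequence $M_a\xrightarrow{(M(a\le b),M(a\le c))}M_b\oplus M_c\xrightarrow{M(b\le d)-M(c\le d)}M_d$ is exact at the middle. Intervals in a totally ordered set are non-empty convex subsets. For a subset $B$ of a poset $Q$, $k_B$ is the module over $Q$ equal to $k$ on $B$, $0$ elsewhere, with identity maps between points of $B$ and zero maps otherwise; $M|_Q$ is the restriction of $M$ to $Q$. *)

theory Defs
  imports Main "HOL.Vector_Spaces" "HOL-Library.Product_Order"
begin

text \<open>All the vector spaces M_p are subspaces V p of one ambient k-vector space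
  (type 'v with scalar multiplication scale); F p q is the structure map M(p \<le> q),
  only its behaviour on V p matters.\<close>

definition lin_on :: "('k::field \<Rightarrow> 'v::ab_group_add \<Rightarrow> 'v) \<Rightarrow> ('k \<Rightarrow> 'w::ab_group_add \<Rightarrow> 'w)
    \<Rightarrow> 'v set \<Rightarrow> 'w set \<Rightarrow> ('v \<Rightarrow> 'w) \<Rightarrow> bool" where
  "lin_on sc1 sc2 A B f \<longleftrightarrow>
     (\<forall>x\<in>A. f x \<in> B) \<and>
     (\<forall>x\<in>A. \<forall>y\<in>A. f (x + y) = f x + f y) \<and>
     (\<forall>c. \<forall>x\<in>A. f (sc1 c x) = sc2 c (f x))"

definition pmodule :: "('k::field \<Rightarrow> 'v::ab_group_add \<Rightarrow> 'v) \<Rightarrow> ('p::order) set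
    \<Rightarrow> ('p \<Rightarrow> 'v set) \<Rightarrow> ('p \<Rightarrow> 'p \<Rightarrow> 'v \<Rightarrow> 'v) \<Rightarrow> bool" where
  "pmodule sc Q V F \<longleftrightarrow>
     vector_space sc \<and>
     (\<forall>p\<in>Q. module.subspace sc (V p)) \<and>
     (\<forall>p\<in>Q. \<forall>q\<in>Q. p \<le> q \<longrightarrow> lin_on sc sc (V p) (V q) (F p q)) \<and>
     (\<forall>p\<in>Q. \<forall>x\<in>V p. F p p x = x) \<and>
     (\<forall>p\<in>Q. \<forall>q\<in>Q. \<forall>r\<in>Q. p \<le> q \<longrightarrow> q \<le> r \<longrightarrow>
        (\<forall>x\<in>V p. F q r (F p q x) = F p r x))"

definition pfd :: "('k::field \<Rightarrow> 'v::ab_group_add \<Rightarrow> 'v) \<Rightarrow> 'p set \<Rightarrow> ('p \<Rightarrow> 'v set) \<Rightarrow> bool" where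
  "pfd sc Q V \<longleftrightarrow> (\<forall>p\<in>Q. \<exists>B. finite B \<and> B \<subseteq> V p \<and> module.span sc B = V p)"

definition pmorphism :: "('k::field \<Rightarrow> 'v::ab_group_add \<Rightarrow> 'v) \<Rightarrow> ('k \<Rightarrow> 'w::ab_group_add \<Rightarrow> 'w)
    \<Rightarrow> ('p::order) set \<Rightarrow> ('p \<Rightarrow> 'v set) \<Rightarrow> ('p \<Rightarrow> 'p \<Rightarrow> 'v \<Rightarrow> 'v)
    \<Rightarrow> ('p \<Rightarrow> 'w set) \<Rightarrow> ('p \<Rightarrow> 'p \<Rightarrow> 'w \<Rightarrow> 'w) \<Rightarrow> ('p \<Rightarrow> 'v \<Rightarrow> 'w) \<Rightarrow> bool" where
  "pmorphism sc1 sc2 Q V1 F1 V2 F2 \<phi> \<longleftrightarrow>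
     (\<forall>p\<in>Q. lin_on sc1 sc2 (V1 p) (V2 p) (\<phi> p)) \<and>
     (\<forall>p\<in>Q. \<forall>q\<in>Q. p \<le> q \<longrightarrow> (\<forall>x\<in>V1 p. \<phi> q (F1 p q x) = F2 p q (\<phi> p x)))"

definition pmono :: "('k::field \<Rightarrow> 'v::ab_group_add \<Rightarrow> 'v) \<Rightarrow> ('k \<Rightarrow> 'w::ab_group_add \<Rightarrow> 'w)
    \<Rightarrow> ('p::order) set \<Rightarrow> ('p \<Rightarrow> 'v set) \<Rightarrow> ('p \<Rightarrow> 'p \<Rightarrow> 'v \<Rightarrow> 'v)
    \<Rightarrow> ('p \<Rightarrow> 'w set) \<Rightarrow> ('p \<Rightarrow> 'p \<Rightarrow> 'w \<Rightarrow> 'w) \<Rightarrow> ('p \<Rightarrow> 'v \<Rightarrow> 'w) \<Rightarrow> bool" where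
  "pmono sc1 sc2 Q V1 F1 V2 F2 \<phi> \<longleftrightarrow>
     pmorphism sc1 sc2 Q V1 F1 V2 F2 \<phi> \<and> (\<forall>p\<in>Q. inj_on (\<phi> p) (V1 p))"

definition kB_sp :: "'p set \<Rightarrow> 'p \<Rightarrow> ('k::field) set" where
  "kB_sp B p = (if p \<in> B then UNIV else {0})"

definition kB_map :: "'p set \<Rightarrow> 'p \<Rightarrow> 'p \<Rightarrow> ('k::field) \<Rightarrow> 'k" where
  "kB_map B p q x = (if p \<in> B \<and> q \<in> B then x else 0)"

definition middle_exact :: "('k::field \<Rightarrow> 'v::ab_group_add \<Rightarrow> 'v)
    \<Rightarrow> (('a::linorder \<times> 'b::linorder) \<Rightarrow> 'v set) \<Rightarrow> ('a \<times> 'b \<Rightarrow> 'a \<times> 'b \<Rightarrow> 'v \<Rightarrow> 'v) \<Rightarrow> bool" where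
  "middle_exact sc V F \<longleftrightarrow>
     (\<forall>x x' y y'. x \<le> x' \<longrightarrow> y \<le> y' \<longrightarrow>
       (let a = (x, y); b = (x, y'); c = (x', y); d = (x', y') in
        \<forall>u\<in>V b. \<forall>w\<in>V c. F b d u - F c d w = 0 \<longrightarrow>
          (\<exists>m\<in>V a. F a b m = u \<and> F a c m = w)))"

definition interval :: "('a::linorder) set \<Rightarrow> bool" where
  "interval J \<longleftrightarrow> J \<noteq> {} \<and> (\<forall>x\<in>J. \<forall>z\<in>J. \<forall>y. x \<le> y \<longrightarrow> y \<le> z \<longrightarrow> y \<in> J)"

end

theory Submission
  imports Defs
begin

text \<open>
  A monomorphism \<open>k\<^bsub>{s} \<times> J\<^esub> \<rightarrow> M\<close> is a family of non-zero vectors \<open>m\<^sub>j \<in> M\<^bsub>(s,j)\<^esub>\<close>,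
  compatible along \<open>J\<close> and killed on leaving \<open>J\<close>; an extension is such a family \<open>n\<^sub>p\<close> on
  \<open>(-\<infinity>, s] \<times> J\<close>. At \<open>p = (x, j)\<close> the admissible values of \<open>n\<^sub>p\<close>, those mapping to \<open>m\<^sub>j\<close> and
  dying at every \<open>(x, k)\<close> with \<open>k\<close> above \<open>J\<close>, form an affine subspace of \<open>M\<^sub>p\<close>. It is
  non-empty by middle exactness on the square spanned by \<open>(x, j)\<close> and \<open>(s, k\<^sub>0)\<close>, where
  \<open>k\<^sub>0\<close> has the smallest kernel; it exists because affine subspaces of a finite-dimensional
  space satisfy the descending chain condition. These affine spaces form an inverse system
  over the codirected set \<open>(-\<infinity>, s] \<times> J\<close>, and by a Mittag-Leffler argument (a minimal
  subsystem, provided by Zorn's lemma, consists of singletons) it has a compatible family of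
  points. The second statement is the first one with the two factors swapped.
\<close>

lemma lin_on_zero:
  assumes "lin_on sc1 sc2 A B f" "0 \<in> A"
  shows "f 0 = 0"
proof -
  have "f (0 + 0) = f 0 + f 0" using assms unfolding lin_on_def by blast
  then show ?thesis by simp
qed

section \<open>Affine subspaces of finite-dimensional spaces\<close>

context vector_space
begin

definition finitely_spanned :: "'b set \<Rightarrow> bool" where
  "finitely_spanned W \<longleftrightarrow> (\<exists>B. finite B \<and> B \<subseteq> W \<and> span B = W)"

definition coset :: "'b set \<Rightarrow> 'b set \<Rightarrow> bool" where
  "coset W0 A \<longleftrightarrow> (\<exists>a W. a \<in> W0 \<and> subspace W \<and> W \<subseteq> W0 \<and> A = (+) a ` W)"

definition direction :: "'b set \<Rightarrow> 'b set" where
  "direction A = {x - y |x y. x \<in> A \<and> y \<in> A}"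

lemma subspace_eq_if_dim_le:
  assumes "finitely_spanned W0" "subspace W" "W \<subseteq> W'" "W' \<subseteq> W0" "dim W' \<le> dim W"
  shows "W = W'"
proof (rule ccontr)
  obtain B0 where B0: "finite B0" "W0 \<subseteq> span B0"
    using assms(1) span_superset unfolding finitely_spanned_def by blast
  have bounded: "finite J \<and> card J \<le> dim X" if "X \<subseteq> W0" "J \<subseteq> X" "independent J" for X J
  proof -
    obtain B where B: "B \<subseteq> X" "independent B" "X \<subseteq> span B" "card B = dim X"
      by (rule basis_exists)
    have "finite B"
      using independent_span_bound[OF B0(1) B(2)] B(1) that(1) B0(2) by blast
    then show ?thesis
      using independent_span_bound[OF _ that(3)] B that(2) by fastforce
  qed
  assume "W \<noteq> W'"
  then obtain x where x: "x \<in> W'" "x \<notin> W" using assms(3) by auto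
  obtain B where B: "B \<subseteq> W" "independent B" "W \<subseteq> span B" "card B = dim W"
    by (rule basis_exists)
  have "x \<notin> span B" using x span_minimal[OF B(1) assms(2)] by auto
  then have indep: "independent (insert x B)" and "x \<notin> B"
    using independent_insertI[OF _ B(2)] span_base by auto
  have "insert x B \<subseteq> W'" using B(1) x(1) assms(3) by auto
  then have "card (insert x B) \<le> dim W'" and "finite B"
    using bounded[OF assms(4) _ indep] by auto
  then show False using \<open>x \<notin> B\<close> B(4) assms(5) by simp
qed

lemma direction_coset: "subspace W \<Longrightarrow> direction ((+) a ` W) = W"
proof
  assume W: "subspace W"
  show "direction ((+) a ` W) \<subseteq> W"
    unfolding direction_def using subspace_diff[OF W] by auto
  show "W \<subseteq> direction ((+) a ` W)"
  proof
    fix w assume "w \<in> W"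
    then have "w = (a + w) - (a + 0)" "a + w \<in> (+) a ` W" "a + 0 \<in> (+) a ` W"
      using subspace_0[OF W] by auto
    then show "w \<in> direction ((+) a ` W)" unfolding direction_def by blast
  qed
qed

lemma direction_mono: "A \<subseteq> B \<Longrightarrow> direction A \<subseteq> direction B"
  unfolding direction_def by blast

lemma translate_subspace_recenter:
  assumes "subspace W" "c \<in> (+) a ` W"
  shows "(+) a ` W = (+) c ` W"
proof -
  obtain w0 where w0: "w0 \<in> W" "c = a + w0" using assms(2) by auto
  show ?thesis
  proof (intro set_eqI iffI)
    fix x assume "x \<in> (+) a ` W"
    then obtain w where "w \<in> W" "x = a + w" by auto
    then have "x = c + (w - w0)" "w - w0 \<in> W" using w0 subspace_diff[OF assms(1)] by auto
    then show "x \<in> (+) c ` W" by blast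
  next
    fix x assume "x \<in> (+) c ` W"
    then obtain w where "w \<in> W" "x = c + w" by auto
    then have "x = a + (w0 + w)" "w0 + w \<in> W" using w0 subspace_add[OF assms(1)] by (auto simp: add.assoc)
    then show "x \<in> (+) a ` W" by blast
  qed
qed

lemma coset_subset: "coset W0 A \<Longrightarrow> subspace W0 \<Longrightarrow> A \<subseteq> W0"
  unfolding coset_def using subspace_add by blast

lemma coset_nonempty: "coset W0 A \<Longrightarrow> A \<noteq> {}"
  unfolding coset_def using subspace_0 by blast

lemma directed_cosets_Inter_mem:
  assumes fin: "finitely_spanned W0" and ne: "\<A> \<noteq> {}" and cos: "\<And>A. A \<in> \<A> \<Longrightarrow> coset W0 A"
    and dir: "\<And>A B. A \<in> \<A> \<Longrightarrow> B \<in> \<A> \<Longrightarrow> \<exists>C\<in>\<A>. C \<subseteq> A \<and> C \<subseteq> B"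
  shows "\<Inter>\<A> \<in> \<A>"
proof -
  obtain A1 where "A1 \<in> \<A>" using ne by auto
  then obtain A0 where A0: "A0 \<in> \<A>" and least: "\<And>B. B \<in> \<A> \<Longrightarrow> dim (direction A0) \<le> dim (direction B)"
    using ex_has_least_nat[of "\<lambda>A. A \<in> \<A>" A1 "\<lambda>A. dim (direction A)"] by blast
  have "A0 \<subseteq> A" if A: "A \<in> \<A>" for A
  proof -
    obtain C where C: "C \<in> \<A>" "C \<subseteq> A" "C \<subseteq> A0" using dir[OF A A0] by blast
    obtain c Wc where c: "subspace Wc" "Wc \<subseteq> W0" "C = (+) c ` Wc"
      using cos[OF C(1)] coset_def by auto
    obtain a W where a: "subspace W" "W \<subseteq> W0" "A0 = (+) a ` W"
      using cos[OF A0] coset_def by auto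
    have "c \<in> A0" using C(3) c subspace_0 by force
    then have A0c: "A0 = (+) c ` W" using translate_subspace_recenter[OF a(1)] a(3) by simp
    have "Wc \<subseteq> W" and "dim W \<le> dim Wc"
      using direction_mono[OF C(3)] least[OF C(1)] direction_coset[OF c(1)] direction_coset[OF a(1)] c(3) A0c
      by auto
    then have "Wc = W" using subspace_eq_if_dim_le[OF fin c(1) _ a(2)] by blast
    then show ?thesis using A0c c(3) C(2) by simp
  qed
  then have "\<Inter>\<A> = A0" using A0 by blast
  then show ?thesis using A0 by simp
qed

lemma coset_image:
  assumes lin: "lin_on scale scale V1 V2 f" and V1: "subspace V1" and A: "coset V1 A"
  shows "coset V2 (f ` A)"
proof -
  obtain a W where a: "a \<in> V1" "subspace W" "W \<subseteq> V1" "A = (+) a ` W"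
    using A coset_def by auto
  have add: "\<And>x y. x \<in> V1 \<Longrightarrow> y \<in> V1 \<Longrightarrow> f (x + y) = f x + f y"
    and scale: "\<And>c x. x \<in> V1 \<Longrightarrow> f (c *s x) = c *s f x"
    and into: "\<And>x. x \<in> V1 \<Longrightarrow> f x \<in> V2"
    using lin unfolding lin_on_def by auto
  have "f ` A = (\<lambda>w. f a + f w) ` W"
    using a add by (auto simp: image_image intro!: image_cong)
  then have "f ` A = (+) (f a) ` (f ` W)" by (simp add: image_image)
  moreover have "subspace (f ` W)"
    unfolding subspace_def
  proof (intro conjI ballI allI)
    show "0 \<in> f ` W"
      using lin_on_zero[OF lin subspace_0[OF V1]] subspace_0[OF a(2)] by force
    fix x y assume "x \<in> f ` W" "y \<in> f ` W"
    then obtain u v where "u \<in> W" "v \<in> W" "x = f u" "y = f v" by auto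
    then show "x + y \<in> f ` W"
      using add[of u v] a(3) subspace_add[OF a(2)] by (metis image_eqI subsetD)
  next
    fix c x assume "x \<in> f ` W"
    then obtain u where "u \<in> W" "x = f u" by auto
    then show "c *s x \<in> f ` W"
      using scale[of u c] a(3) subspace_scale[OF a(2)] by (metis image_eqI subsetD)
  qed
  ultimately show ?thesis
    unfolding coset_def using into a(1,3) by blast
qed

lemma coset_fibre:
  assumes lin: "lin_on scale scale V1 V2 f" and V1: "subspace V1" and A: "coset V1 A"
    and a0: "a0 \<in> A" "f a0 = b"
  shows "coset V1 {y \<in> A. f y = b}"
proof -
  obtain W where W: "subspace W" "W \<subseteq> V1" "A = (+) a0 ` W"
    using A a0(1) translate_subspace_recenter unfolding coset_def by metis
  have a0V: "a0 \<in> V1" using coset_subset[OF A V1] a0(1) by auto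
  have add: "\<And>x y. x \<in> V1 \<Longrightarrow> y \<in> V1 \<Longrightarrow> f (x + y) = f x + f y"
    and scale: "\<And>c x. x \<in> V1 \<Longrightarrow> f (c *s x) = c *s f x"
    using lin unfolding lin_on_def by auto
  let ?K = "{w \<in> W. f w = 0}"
  have "{y \<in> A. f y = b} = (+) a0 ` ?K"
    using W add[OF a0V] a0(2) by auto
  moreover have "subspace ?K"
    unfolding subspace_def
  proof (intro conjI ballI allI)
    show "0 \<in> ?K" using lin_on_zero[OF lin subspace_0[OF V1]] subspace_0[OF W(1)] by simp
    fix x y assume "x \<in> ?K" "y \<in> ?K"
    then show "x + y \<in> ?K" using add[of x y] W(2) subspace_add[OF W(1)] by auto
  next
    fix c x assume "x \<in> ?K"
    then show "c *s x \<in> ?K" using scale[of x c] W(2) subspace_scale[OF W(1)] by auto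
  qed
  ultimately show ?thesis
    unfolding coset_def using a0V W(2) by blast
qed

lemma coset_kernel:
  assumes "lin_on scale scale V1 V2 f" "subspace V1"
  shows "coset V1 {y \<in> V1. f y = 0}"
proof (rule coset_fibre[OF assms])
  show "coset V1 V1"
    unfolding coset_def using assms(2) subspace_0 by (intro exI[of _ 0]) auto
  show "0 \<in> V1" "f 0 = 0"
    using lin_on_zero[OF assms(1) subspace_0[OF assms(2)]] subspace_0[OF assms(2)] by auto
qed

end

section \<open>Inverse systems of affine subspaces\<close>

locale affine_inverse_system = vector_space scale
  for scale :: "'k::field \<Rightarrow> 'v::ab_group_add \<Rightarrow> 'v"
  + fixes I :: "'p::order set" and V :: "'p \<Rightarrow> 'v set" and F :: "'p \<Rightarrow> 'p \<Rightarrow> 'v \<Rightarrow> 'v"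
  assumes codirected: "p \<in> I \<Longrightarrow> q \<in> I \<Longrightarrow> \<exists>r\<in>I. r \<le> p \<and> r \<le> q"
    and subspace_V: "p \<in> I \<Longrightarrow> subspace (V p)"
    and finitely_spanned_V: "p \<in> I \<Longrightarrow> finitely_spanned (V p)"
    and lin_F: "p \<in> I \<Longrightarrow> q \<in> I \<Longrightarrow> p \<le> q \<Longrightarrow> lin_on scale scale (V p) (V q) (F p q)"
    and F_id: "p \<in> I \<Longrightarrow> x \<in> V p \<Longrightarrow> F p p x = x"
    and F_comp: "p \<in> I \<Longrightarrow> q \<in> I \<Longrightarrow> r \<in> I \<Longrightarrow> p \<le> q \<Longrightarrow> q \<le> r \<Longrightarrow> x \<in> V p \<Longrightarrow>
      F q r (F p q x) = F p r x"
begin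

definition coset_system :: "('p \<Rightarrow> 'v set) \<Rightarrow> bool" where
  "coset_system A \<longleftrightarrow>
     (\<forall>p\<in>I. coset (V p) (A p)) \<and> (\<forall>p\<in>I. \<forall>q\<in>I. p \<le> q \<longrightarrow> F p q ` A p \<subseteq> A q)"

definition minimal_coset_system :: "('p \<Rightarrow> 'v set) \<Rightarrow> bool" where
  "minimal_coset_system M \<longleftrightarrow> coset_system M \<and>
     (\<forall>X. coset_system X \<longrightarrow> (\<forall>p\<in>I. X p \<subseteq> M p) \<longrightarrow> (\<forall>p\<in>I. X p = M p))"

definition stable_image :: "('p \<Rightarrow> 'v set) \<Rightarrow> 'p \<Rightarrow> 'v set" where
  "stable_image A p = (\<Inter>q\<in>{q\<in>I. q \<le> p}. F q p ` A q)"

lemma coset_systemD: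
  assumes "coset_system A"
  shows "p \<in> I \<Longrightarrow> coset (V p) (A p)"
    and "p \<in> I \<Longrightarrow> q \<in> I \<Longrightarrow> p \<le> q \<Longrightarrow> F p q ` A p \<subseteq> A q"
  using assms unfolding coset_system_def by blast+

lemma coset_system_subset: "coset_system A \<Longrightarrow> p \<in> I \<Longrightarrow> A p \<subseteq> V p"
  by (rule coset_subset[OF coset_systemD(1) subspace_V])

lemma coset_system_image_mono:
  assumes A: "coset_system A" and I: "r \<in> I" "q \<in> I" "p \<in> I" and le: "r \<le> q" "q \<le> p"
  shows "F r p ` A r \<subseteq> F q p ` A q"
proof
  fix y assume "y \<in> F r p ` A r"
  then obtain z where z: "z \<in> A r" "y = F r p z" by auto
  have "F r q z \<in> A q" using coset_systemD(2)[OF A I(1,2) le(1)] z(1) by blast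
  moreover have "F q p (F r q z) = y"
    using F_comp[OF I le] coset_system_subset[OF A I(1)] z by auto
  ultimately show "y \<in> F q p ` A q" by (metis image_eqI)
qed

lemma stable_image_subset: "p \<in> I \<Longrightarrow> q \<in> I \<Longrightarrow> q \<le> p \<Longrightarrow> stable_image A p \<subseteq> F q p ` A q"
  unfolding stable_image_def by blast

lemma stable_image_le:
  assumes "coset_system A" "p \<in> I"
  shows "stable_image A p \<subseteq> A p"
  using stable_image_subset[OF assms(2) assms(2) order_refl, of A]
    coset_systemD(2)[OF assms(1) assms(2) assms(2) order_refl] by (rule order_trans)

text \<open>By the descending chain condition the stable image is attained at a single index.\<close>
lemma coset_system_stable_image:
  assumes A: "coset_system A"
  shows "coset_system (stable_image A)"
  unfolding coset_system_def
proof (intro conjI ballI impI)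
  fix p assume p: "p \<in> I"
  let ?\<A> = "(\<lambda>q. F q p ` A q) ` {q\<in>I. q \<le> p}"
  have cos: "coset (V p) X" if X: "X \<in> ?\<A>" for X
  proof -
    obtain q where q: "q \<in> I" "q \<le> p" "X = F q p ` A q" using X by blast
    show ?thesis
      using coset_image[OF lin_F[OF q(1) p q(2)] subspace_V[OF q(1)]] A q(1,3)
      unfolding coset_system_def by blast
  qed
  have dir: "\<exists>Z\<in>?\<A>. Z \<subseteq> X \<and> Z \<subseteq> Y" if XY: "X \<in> ?\<A>" "Y \<in> ?\<A>" for X Y
  proof -
    obtain q1 q2 where q: "q1 \<in> I" "q1 \<le> p" "X = F q1 p ` A q1"
      "q2 \<in> I" "q2 \<le> p" "Y = F q2 p ` A q2" using XY by auto
    obtain r where r: "r \<in> I" "r \<le> q1" "r \<le> q2" using codirected[OF q(1,4)] by blast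
    show ?thesis
      using coset_system_image_mono[OF A r(1) q(1) p r(2) q(2)]
        coset_system_image_mono[OF A r(1) q(4) p r(3) q(5)] q r order_trans[OF r(2) q(2)] by blast
  qed
  have "\<Inter>?\<A> \<in> ?\<A>"
    using directed_cosets_Inter_mem[OF finitely_spanned_V[OF p] _ cos dir] p by blast
  then show "coset (V p) (stable_image A p)"
    using cos unfolding stable_image_def by simp
next
  fix p q assume p: "p \<in> I" and q: "q \<in> I" and pq: "p \<le> q"
  show "F p q ` stable_image A p \<subseteq> stable_image A q"
    unfolding stable_image_def
  proof (intro subsetI INT_I)
    fix y q' assume y: "y \<in> F p q ` (\<Inter>r\<in>{r \<in> I. r \<le> p}. F r p ` A r)" and q': "q' \<in> {q' \<in> I. q' \<le> q}"
    obtain r where r: "r \<in> I" "r \<le> p" "r \<le> q'" using codirected[OF p] q' by blast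
    obtain z where z: "z \<in> A r" "y = F p q (F r p z)" using y r by blast
    have "y = F r q z" using F_comp[OF r(1) p q r(2) pq] coset_system_subset[OF A r(1)] z by auto
    also have "\<dots> = F q' q (F r q' z)"
      using F_comp[OF r(1) _ q r(3)] q' coset_system_subset[OF A r(1)] z by auto
    finally show "y \<in> F q' q ` A q'"
      using A r q' z(1) unfolding coset_system_def by blast
  qed
qed

lemma coset_system_cong: "(\<And>p. p \<in> I \<Longrightarrow> X p = Y p) \<Longrightarrow> coset_system X \<longleftrightarrow> coset_system Y"
  unfolding coset_system_def by simp

lemma coset_system_Inter_chain:
  assumes ne: "\<X> \<noteq> {}" and sys: "\<And>X. X \<in> \<X> \<Longrightarrow> coset_system X"
    and chain: "\<And>X Y. X \<in> \<X> \<Longrightarrow> Y \<in> \<X> \<Longrightarrow> X \<le> Y \<or> Y \<le> X"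
  shows "coset_system (\<lambda>p. \<Inter>X\<in>\<X>. X p)"
  unfolding coset_system_def
proof (intro conjI ballI impI)
  fix p assume p: "p \<in> I"
  have cos: "coset (V p) Z" if "Z \<in> (\<lambda>X. X p) ` \<X>" for Z
    using that coset_systemD(1)[OF sys p] by blast
  have dir: "\<exists>W\<in>(\<lambda>X. X p) ` \<X>. W \<subseteq> Z \<and> W \<subseteq> Z'"
    if Z: "Z \<in> (\<lambda>X. X p) ` \<X>" "Z' \<in> (\<lambda>X. X p) ` \<X>" for Z Z'
  proof -
    obtain X Y where "X \<in> \<X>" "Y \<in> \<X>" "Z = X p" "Z' = Y p" using Z by blast
    moreover have "X p \<subseteq> Y p \<or> Y p \<subseteq> X p" using chain[OF calculation(1,2)] by (metis le_funD)
    ultimately show ?thesis by blast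
  qed
  have "\<Inter>((\<lambda>X. X p) ` \<X>) \<in> (\<lambda>X. X p) ` \<X>"
    using directed_cosets_Inter_mem[OF finitely_spanned_V[OF p] _ cos dir] ne by blast
  then show "coset (V p) (\<Inter>X\<in>\<X>. X p)" using cos by simp
next
  fix p q assume pq: "p \<in> I" "q \<in> I" "p \<le> q"
  have "F p q ` (\<Inter>X\<in>\<X>. X p) \<subseteq> X q" if "X \<in> \<X>" for X
    using coset_systemD(2)[OF sys[OF that] pq] that by blast
  then show "F p q ` (\<Inter>X\<in>\<X>. X p) \<subseteq> (\<Inter>X\<in>\<X>. X q)" by blast
qed

lemma minimal_coset_system_exists:
  assumes A: "coset_system A"
  shows "\<exists>M. minimal_coset_system M \<and> M \<le> A"
proof -
  let ?S = "{X. coset_system X \<and> X \<le> A}"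
  have "\<exists>M\<in>?S. \<forall>X\<in>?S. X \<le> M \<longrightarrow> X = M"
  proof (rule predicate_Zorn)
    show "partial_order_on ?S (relation_of (\<lambda>X Y. Y \<le> X) ?S)"
      by (rule partial_order_on_relation_ofI) auto
    fix \<C> assume \<C>: "\<C> \<in> Chains (relation_of (\<lambda>X Y. Y \<le> X) ?S)"
    then have sub: "\<C> \<subseteq> ?S" and chain: "\<And>X Y. X \<in> \<C> \<Longrightarrow> Y \<in> \<C> \<Longrightarrow> X \<le> Y \<or> Y \<le> X"
      unfolding Chains_def relation_of_def by blast+
    show "\<exists>U\<in>?S. \<forall>X\<in>\<C>. U \<le> X"
    proof (cases "\<C> = {}")
      case True
      then show ?thesis using A by blast
    next
      case False
      have "coset_system (\<lambda>p. \<Inter>X\<in>\<C>. X p)"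
        using coset_system_Inter_chain[OF False _ chain] sub by blast
      moreover have lower: "(\<lambda>p. \<Inter>X\<in>\<C>. X p) \<le> X" if "X \<in> \<C>" for X
        using that by (auto simp: le_fun_def)
      moreover obtain X0 where X0: "X0 \<in> \<C>" using False by blast
      then have "X0 \<le> A" using sub by blast
      then have "(\<lambda>p. \<Inter>X\<in>\<C>. X p) \<le> A" using order_trans[OF lower[OF X0]] by blast
      ultimately show ?thesis by blast
    qed
  qed
  then obtain M where M: "coset_system M" "M \<le> A"
    and max: "\<And>X. coset_system X \<Longrightarrow> X \<le> A \<Longrightarrow> X \<le> M \<Longrightarrow> X = M"
    by blast
  have "\<forall>p\<in>I. X p = M p" if X: "coset_system X" "\<forall>p\<in>I. X p \<subseteq> M p" for X
  proof -
    define X' where "X' p = (if p \<in> I then X p else M p)" for p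
    have "coset_system X'" using X(1) coset_system_cong[of X' X] by (simp add: X'_def)
    moreover have "X' \<le> M" using X(2) by (simp add: X'_def le_fun_def)
    ultimately have "X' = M" using max order_trans[OF _ M(2)] by blast
    then show ?thesis by (metis X'_def)
  qed
  then show ?thesis unfolding minimal_coset_system_def using M by blast
qed

lemma minimal_coset_system_surjective:
  assumes M: "minimal_coset_system M" and I: "q \<in> I" "p \<in> I" and le: "q \<le> p"
  shows "M p \<subseteq> F q p ` M q"
proof -
  have "coset_system M" using M unfolding minimal_coset_system_def by blast
  then have "stable_image M p = M p"
    using M coset_system_stable_image stable_image_le I(2) unfolding minimal_coset_system_def by blast
  then show ?thesis using stable_image_subset[OF I(2,1) le, of M] by simp
qed

text \<open>The fibres over a point of a minimal system form a smaller system, so they exhaust it.\<close>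
lemma minimal_coset_system_singleton:
  assumes M: "minimal_coset_system M" and p0: "p0 \<in> I" and b: "b \<in> M p0"
  shows "M p0 = {b}"
proof -
  have sys: "coset_system M" using M unfolding minimal_coset_system_def by blast
  define C where "C q = (if q \<le> p0 then {y \<in> M q. F q p0 y = b} else M q)" for q
  have "coset_system C"
    unfolding coset_system_def
  proof (intro conjI ballI impI)
    fix q assume q: "q \<in> I"
    show "coset (V q) (C q)"
    proof (cases "q \<le> p0")
      case True
      then obtain y where "y \<in> M q" "F q p0 y = b"
        using minimal_coset_system_surjective[OF M q p0] b by blast
      then show ?thesis
        using coset_fibre[OF lin_F[OF q p0 True] subspace_V[OF q]] sys q True
        unfolding C_def coset_system_def by simp
    next
      case False
      then show ?thesis using sys q unfolding C_def coset_system_def by simp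
    qed
  next
    fix r q assume r: "r \<in> I" and q: "q \<in> I" and rq: "r \<le> q"
    have "F r q ` C r \<subseteq> F r q ` M r" unfolding C_def by auto
    also have "\<dots> \<subseteq> M q" using sys r q rq unfolding coset_system_def by blast
    finally have "F r q ` C r \<subseteq> M q" .
    moreover have "F q p0 (F r q y) = b" if "q \<le> p0" "y \<in> C r" for y
      using that F_comp[OF r q p0 rq] order_trans[OF rq] coset_system_subset[OF sys r]
      unfolding C_def by auto
    ultimately show "F r q ` C r \<subseteq> C q" unfolding C_def by auto
  qed
  moreover have "\<forall>q\<in>I. C q \<subseteq> M q" unfolding C_def by auto
  ultimately have "C p0 = M p0" using M p0 unfolding minimal_coset_system_def by blast
  moreover have "C p0 \<subseteq> {b}"
    using F_id[OF p0] coset_system_subset[OF sys p0] unfolding C_def by auto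
  ultimately show ?thesis using b by auto
qed

text \<open>Mittag-Leffler: a minimal coset subsystem consists of singletons.\<close>
theorem coset_system_compatible_point:
  assumes "coset_system A"
  shows "\<exists>n. \<forall>p\<in>I. n p \<in> A p \<and> (\<forall>q\<in>I. p \<le> q \<longrightarrow> F p q (n p) = n q)"
proof -
  obtain M where M: "minimal_coset_system M" "M \<le> A"
    using minimal_coset_system_exists[OF assms] by blast
  have sys: "coset_system M" using M(1) unfolding minimal_coset_system_def by blast
  define n where "n p = (SOME v. v \<in> M p)" for p
  have single: "M p = {n p}" if "p \<in> I" for p
    using minimal_coset_system_singleton[OF M(1) that] coset_nonempty sys that
    unfolding n_def coset_system_def by (metis ex_in_conv someI)
  show ?thesis
  proof (intro exI ballI conjI impI)
    fix p assume p: "p \<in> I"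
    show "n p \<in> A p" using single[OF p] M(2) by (auto simp: le_fun_def)
    fix q assume q: "q \<in> I" and pq: "p \<le> q"
    have "F p q (n p) \<in> M q" using coset_systemD(2)[OF sys p q pq] single[OF p] by simp
    then show "F p q (n p) = n q" using single[OF q] by simp
  qed
qed

end

section \<open>Monomorphisms out of interval modules\<close>

lemma pmoduleD:
  assumes "pmodule sc Q V F"
  shows "vector_space sc"
    and "p \<in> Q \<Longrightarrow> module.subspace sc (V p)"
    and "p \<in> Q \<Longrightarrow> q \<in> Q \<Longrightarrow> p \<le> q \<Longrightarrow> lin_on sc sc (V p) (V q) (F p q)"
    and "p \<in> Q \<Longrightarrow> x \<in> V p \<Longrightarrow> F p p x = x"
    and "p \<in> Q \<Longrightarrow> q \<in> Q \<Longrightarrow> r \<in> Q \<Longrightarrow> p \<le> q \<Longrightarrow> q \<le> r \<Longrightarrow> x \<in> V p \<Longrightarrow>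
      F q r (F p q x) = F p r x"
  using assms unfolding pmodule_def by simp_all

definition kB_generators :: "('p::order) set \<Rightarrow> 'p set \<Rightarrow> ('p \<Rightarrow> 'v::ab_group_add set)
    \<Rightarrow> ('p \<Rightarrow> 'p \<Rightarrow> 'v \<Rightarrow> 'v) \<Rightarrow> ('p \<Rightarrow> 'v) \<Rightarrow> bool" where
  "kB_generators Q B V F n \<longleftrightarrow>
     (\<forall>p\<in>Q \<inter> B. n p \<in> V p \<and> n p \<noteq> 0 \<and>
        (\<forall>q\<in>Q. p \<le> q \<longrightarrow> F p q (n p) = (if q \<in> B then n q else 0)))"

lemma kB_generatorsD:
  assumes "kB_generators Q B V F n" "p \<in> Q" "p \<in> B"
  shows "n p \<in> V p" and "n p \<noteq> 0"
    and "q \<in> Q \<Longrightarrow> p \<le> q \<Longrightarrow> F p q (n p) = (if q \<in> B then n q else 0)"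
  using assms unfolding kB_generators_def by simp_all

lemma pmono_kB_zero:
  assumes "pmono (*) sc Q (kB_sp B) (kB_map B) V F h" "p \<in> Q"
  shows "h p 0 = 0"
proof (rule lin_on_zero)
  show "lin_on (*) sc (kB_sp B p) (V p) (h p)"
    using assms unfolding pmono_def pmorphism_def by blast
  show "0 \<in> kB_sp B p" unfolding kB_sp_def by simp
qed

lemma pmono_kB_scale:
  assumes "pmono (*) sc Q (kB_sp B) (kB_map B) V F h" "p \<in> Q" "p \<in> B"
  shows "h p c = sc c (h p 1)"
proof -
  have "lin_on (*) sc UNIV (V p) (h p)"
    using assms unfolding pmono_def pmorphism_def kB_sp_def by auto
  then show ?thesis unfolding lin_on_def by (metis mult.right_neutral UNIV_I)
qed

lemma pmono_kB_generators:
  assumes h: "pmono (*) sc Q (kB_sp B) (kB_map B) V F h"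
  shows "kB_generators Q B V F (\<lambda>p. h p 1)"
  unfolding kB_generators_def
proof (intro ballI conjI impI)
  fix p assume "p \<in> Q \<inter> B"
  then have p: "p \<in> Q" "p \<in> B" by auto
  have lin: "lin_on (*) sc UNIV (V p) (h p)" and inj: "inj_on (h p) UNIV"
    using h p unfolding pmono_def pmorphism_def kB_sp_def by auto
  show "h p 1 \<in> V p" using lin unfolding lin_on_def by blast
  show "h p 1 \<noteq> 0"
    using inj pmono_kB_zero[OF h p(1)] by (metis UNIV_I inj_on_def one_neq_zero)
  fix q assume q: "q \<in> Q" and pq: "p \<le> q"
  have "h q (kB_map B p q 1) = F p q (h p 1)"
    using h p q pq unfolding pmono_def pmorphism_def kB_sp_def by auto
  then show "F p q (h p 1) = (if q \<in> B then h q 1 else 0)"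
    using pmono_kB_zero[OF h q] p(2) unfolding kB_map_def by auto
qed

lemma kB_generators_pmono:
  fixes sc :: "'k::field \<Rightarrow> 'v::ab_group_add \<Rightarrow> 'v"
  assumes M: "pmodule sc Q V F" and n: "kB_generators Q B V F n"
  shows "pmono (*) sc Q (kB_sp B) (kB_map B) V F (\<lambda>p c. if p \<in> B then sc c (n p) else 0)"
proof -
  interpret vector_space sc by (rule pmoduleD(1)[OF M])
  note sub = pmoduleD(2)[OF M] and lin = pmoduleD(3)[OF M]
  note gen = kB_generatorsD[OF n]
  have lin_scale: "F p q (sc c v) = sc c (F p q v)"
    if "p \<in> Q" "q \<in> Q" "p \<le> q" "v \<in> V p" for p q c v
    using lin[OF that(1-3)] that(4) unfolding lin_on_def by blast
  have F0: "F p q 0 = 0" if "p \<in> Q" "q \<in> Q" "p \<le> q" for p q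
    using lin_on_zero[OF lin[OF that] subspace_0[OF sub[OF that(1)]]] .
  show ?thesis
    unfolding pmono_def pmorphism_def
  proof (intro conjI ballI impI)
    fix p assume p: "p \<in> Q"
    show "lin_on (*) sc (kB_sp B p) (V p) (\<lambda>c. if p \<in> B then sc c (n p) else 0)"
    proof (cases "p \<in> B")
      case True
      then show ?thesis
        using subspace_scale[OF sub[OF p] gen(1)[OF p True]]
        unfolding lin_on_def by (simp add: scale_left_distrib)
    next
      case False
      then show ?thesis using subspace_0[OF sub[OF p]] unfolding lin_on_def by simp
    qed
    show "inj_on (\<lambda>c. if p \<in> B then sc c (n p) else 0) (kB_sp B p)"
      using gen(2)[OF p] unfolding kB_sp_def inj_on_def by simp
  next
    fix p q and x :: 'k assume p: "p \<in> Q" and q: "q \<in> Q" and pq: "p \<le> q" and x: "x \<in> kB_sp B p"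
    show "(if q \<in> B then sc (kB_map B p q x) (n q) else 0) =
        F p q (if p \<in> B then sc x (n p) else 0)"
    proof (cases "p \<in> B")
      case True
      then show ?thesis
        using gen(3)[OF p True q pq] lin_scale[OF p q pq gen(1)[OF p True]] unfolding kB_map_def by simp
    next
      case False
      then show ?thesis using x F0[OF p q pq] unfolding kB_sp_def kB_map_def by simp
    qed
  qed
qed

locale pfd_module =
  fixes sc :: "'k::field \<Rightarrow> 'v::ab_group_add \<Rightarrow> 'v"
    and V :: "'p::order \<Rightarrow> 'v set" and F :: "'p \<Rightarrow> 'p \<Rightarrow> 'v \<Rightarrow> 'v"
  assumes pmodule: "pmodule sc UNIV V F" and pfd: "pfd sc UNIV V"
begin

sublocale vector_space sc
  by (rule pmoduleD(1)[OF pmodule])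

lemma subspace_V: "subspace (V p)"
  using pmoduleD(2)[OF pmodule] by simp

lemma lin_F: "p \<le> q \<Longrightarrow> lin_on sc sc (V p) (V q) (F p q)"
  using pmoduleD(3)[OF pmodule] by simp

lemma F_id: "x \<in> V p \<Longrightarrow> F p p x = x"
  using pmoduleD(4)[OF pmodule] by simp

lemma F_comp: "p \<le> q \<Longrightarrow> q \<le> r \<Longrightarrow> x \<in> V p \<Longrightarrow> F q r (F p q x) = F p r x"
  using pmoduleD(5)[OF pmodule] by simp

lemma pmodule_on: "pmodule sc Q V F"
  unfolding pmodule_def using pmoduleD(1)[OF pmodule] subspace_V lin_F F_id F_comp by simp

lemma F_closed: "p \<le> q \<Longrightarrow> x \<in> V p \<Longrightarrow> F p q x \<in> V q"
  using lin_F unfolding lin_on_def by blast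

lemma F_zero: "p \<le> q \<Longrightarrow> F p q 0 = 0"
  using lin_on_zero[OF lin_F subspace_0[OF subspace_V]] .

definition kernel_to :: "'p \<Rightarrow> 'p \<Rightarrow> 'v set" where
  "kernel_to p q = {v \<in> V p. F p q v = 0}"

lemma kernel_to_coset: "p \<le> q \<Longrightarrow> coset (V p) (kernel_to p q)"
  unfolding kernel_to_def by (rule coset_kernel[OF lin_F subspace_V])

lemma kernel_to_mono:
  assumes "p \<le> q" "q \<le> q'"
  shows "kernel_to p q \<subseteq> kernel_to p q'"
proof
  fix v assume "v \<in> kernel_to p q"
  then have v: "v \<in> V p" "F p q v = 0" unfolding kernel_to_def by simp_all
  have "F p q' v = F q q' (F p q v)" using F_comp[OF assms v(1)] by simp
  also have "\<dots> = 0" using v(2) F_zero[OF assms(2)] by simp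
  finally show "v \<in> kernel_to p q'" using v(1) unfolding kernel_to_def by simp
qed

lemma kernel_to_chain_least:
  assumes ne: "Q \<noteq> {}" and above: "\<And>q. q \<in> Q \<Longrightarrow> p \<le> q"
    and chain: "\<And>q q'. q \<in> Q \<Longrightarrow> q' \<in> Q \<Longrightarrow> q \<le> q' \<or> q' \<le> q"
  shows "\<exists>q0\<in>Q. \<forall>q\<in>Q. kernel_to p q0 \<subseteq> kernel_to p q"
proof -
  have "\<Inter>(kernel_to p ` Q) \<in> kernel_to p ` Q"
  proof (rule directed_cosets_Inter_mem)
    show "finitely_spanned (V p)"
      using pfd unfolding pfd_def finitely_spanned_def by simp
    show "kernel_to p ` Q \<noteq> {}" using ne by simp
    show "coset (V p) A" if "A \<in> kernel_to p ` Q" for A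
      using that kernel_to_coset above by blast
    show "\<exists>C\<in>kernel_to p ` Q. C \<subseteq> A \<and> C \<subseteq> B"
      if AB: "A \<in> kernel_to p ` Q" "B \<in> kernel_to p ` Q" for A B
    proof -
      obtain q q' where q: "q \<in> Q" "q' \<in> Q" "A = kernel_to p q" "B = kernel_to p q'"
        using AB by blast
      consider "q \<le> q'" | "q' \<le> q" using chain[OF q(1,2)] by blast
      then show ?thesis
      proof cases
        case 1
        then show ?thesis using kernel_to_mono[OF above[OF q(1)] 1] q by blast
      next
        case 2
        then show ?thesis using kernel_to_mono[OF above[OF q(2)] 2] q by blast
      qed
    qed
  qed
  then show ?thesis by (metis INF_lower imageE)
qed

lemma affine_inverse_system_on:
  assumes "\<And>p q. p \<in> I \<Longrightarrow> q \<in> I \<Longrightarrow> \<exists>r\<in>I. r \<le> p \<and> r \<le> q"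
  shows "affine_inverse_system sc I V F"
proof unfold_locales
  fix p q r x
  show "p \<in> I \<Longrightarrow> q \<in> I \<Longrightarrow> \<exists>r\<in>I. r \<le> p \<and> r \<le> q" by (rule assms)
  show "subspace (V p)" by (rule subspace_V)
  show "finitely_spanned (V p)"
    using pfd unfolding pfd_def finitely_spanned_def by simp
  show "p \<le> q \<Longrightarrow> lin_on sc sc (V p) (V q) (F p q)" by (rule lin_F)
  show "x \<in> V p \<Longrightarrow> F p p x = x" by (rule F_id)
  show "p \<le> q \<Longrightarrow> q \<le> r \<Longrightarrow> x \<in> V p \<Longrightarrow> F q r (F p q x) = F p r x" by (rule F_comp)
qed

end

section \<open>Middle exact modules over a product of chains\<close>

definition above_interval :: "'a::linorder set \<Rightarrow> 'a set" where
  "above_interval J = {k. k \<notin> J \<and> (\<exists>j\<in>J. j \<le> k)}"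

lemma above_interval_ge:
  assumes "interval J" "k \<in> above_interval J" "j \<in> J"
  shows "j \<le> k"
proof (rule ccontr)
  assume "\<not> j \<le> k"
  then have "k \<le> j" by simp
  moreover obtain j1 where "j1 \<in> J" "j1 \<le> k" "k \<notin> J"
    using assms(2) unfolding above_interval_def by blast
  ultimately show False using assms(1,3) unfolding interval_def by blast
qed

lemma swap_le_swap_iff: "prod.swap p \<le> prod.swap q \<longleftrightarrow> (p::'a::order \<times> 'b::order) \<le> q"
  by (cases p, cases q) auto

lemma pmodule_swap:
  fixes Q :: "('a::order \<times> 'b::order) set"
  assumes "pmodule sc Q V F"
  shows "pmodule sc (prod.swap ` Q) (\<lambda>p. V (prod.swap p)) (\<lambda>p q. F (prod.swap p) (prod.swap q))"
  using assms by (simp add: pmodule_def swap_le_swap_iff)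

lemma pfd_swap: "pfd sc Q V \<Longrightarrow> pfd sc (prod.swap ` Q) (\<lambda>p. V (prod.swap p))"
  by (simp add: pfd_def)

lemma middle_exact_swap:
  assumes mex: "middle_exact sc V F"
  shows "middle_exact sc (\<lambda>p. V (prod.swap p)) (\<lambda>p q. F (prod.swap p) (prod.swap q))"
  unfolding middle_exact_def Let_def
proof (intro allI impI ballI)
  fix x x' y y' u w
  assume xx: "x \<le> x'" and yy: "y \<le> y'" and u: "u \<in> V (prod.swap (x, y'))"
    and w: "w \<in> V (prod.swap (x', y))"
    and eq: "F (prod.swap (x, y')) (prod.swap (x', y')) u - F (prod.swap (x', y)) (prod.swap (x', y')) w = 0"
  have "F (y, x') (y', x') w - F (y', x) (y', x') u = 0"
    using eq by (simp add: eq_iff_diff_eq_0[symmetric])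
  then obtain v where "v \<in> V (y, x)" "F (y, x) (y, x') v = w" "F (y, x) (y', x) v = u"
    using mex[unfolded middle_exact_def Let_def, rule_format, OF yy xx] u w by auto
  then show "\<exists>v\<in>V (prod.swap (x, y)). F (prod.swap (x, y)) (prod.swap (x, y')) v = u \<and>
      F (prod.swap (x, y)) (prod.swap (x', y)) v = w"
    by auto
qed

lemma pmono_kB_swap:
  fixes Q :: "('a::order \<times> 'b::order) set"
  shows "pmono sc1 sc2 (prod.swap ` Q) (kB_sp (prod.swap ` B)) (kB_map (prod.swap ` B))
      (\<lambda>p. V (prod.swap p)) (\<lambda>p q. F (prod.swap p) (prod.swap q)) (\<lambda>p. h (prod.swap p))
    \<longleftrightarrow> pmono sc1 sc2 Q (kB_sp B) (kB_map B) V F h"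
proof -
  have mem_swap: "prod.swap p \<in> prod.swap ` B \<longleftrightarrow> p \<in> B" for p
    by (cases p) simp
  have kB_sp_swap: "kB_sp (prod.swap ` B) (prod.swap p) = kB_sp B p"
    and kB_map_swap: "kB_map (prod.swap ` B) (prod.swap p) (prod.swap q) x = kB_map B p q x" for p q x
    by (simp_all add: kB_sp_def kB_map_def mem_swap)
  have ball_swap: "(\<forall>p\<in>prod.swap ` Q. P p) \<longleftrightarrow> (\<forall>p\<in>Q. P (prod.swap p))" for P
    by auto
  show ?thesis
    by (simp only: pmono_def pmorphism_def ball_swap swap_le_swap_iff kB_sp_swap kB_map_swap swap_swap)
qed

locale middle_exact_module = pfd_module sc V F
  for sc :: "'k::field \<Rightarrow> 'v::ab_group_add \<Rightarrow> 'v"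
    and V :: "'a::linorder \<times> 'b::linorder \<Rightarrow> 'v set" and F :: "'a \<times> 'b \<Rightarrow> 'a \<times> 'b \<Rightarrow> 'v \<Rightarrow> 'v" +
  assumes middle_exact: "middle_exact sc V F"
begin

lemma middle_exact_lift:
  assumes "x \<le> x'" "y \<le> y'" "u \<in> V (x, y')" "w \<in> V (x', y)"
    and "F (x, y') (x', y') u = F (x', y) (x', y') w"
  shows "\<exists>v\<in>V (x, y). F (x, y) (x, y') v = u \<and> F (x, y) (x', y) v = w"
  using middle_exact[unfolded middle_exact_def Let_def, rule_format, OF assms(1-4)] assms(5)
  by simp

text \<open>The possible values at \<open>p\<close> of an extension of the generators \<open>m\<close> to \<open>(-\<infinity>, s] \<times> J\<close>.\<close>
definition lifts :: "'a \<Rightarrow> 'b set \<Rightarrow> ('a \<times> 'b \<Rightarrow> 'v) \<Rightarrow> 'a \<times> 'b \<Rightarrow> 'v set" where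
  "lifts s J m p = {v \<in> V p. F p (s, snd p) v = m (s, snd p) \<and>
     (\<forall>k\<in>above_interval J. F p (fst p, k) v = 0)}"

lemma lifts_coset:
  assumes J: "interval J" "above_interval J \<noteq> {}"
    and m: "kB_generators ({s} \<times> UNIV) ({s} \<times> J) V F m"
    and x: "x \<le> s" and j: "j \<in> J"
  shows "coset (V (x, j)) (lifts s J m (x, j))"
proof -
  let ?K = "above_interval J"
  have jk: "j \<le> k" if "k \<in> ?K" for k
    using above_interval_ge[OF J(1) that j] .
  obtain k0 where k0: "(x, k0) \<in> {x} \<times> ?K"
    and least: "\<And>k. k \<in> ?K \<Longrightarrow> kernel_to (x, j) (x, k0) \<subseteq> kernel_to (x, j) (x, k)"
    using kernel_to_chain_least[of "{x} \<times> ?K" "(x, j)"] J(2) jk by fastforce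
  have "lifts s J m (x, j) = {v \<in> kernel_to (x, j) (x, k0). F (x, j) (s, j) v = m (s, j)}"
    using least k0 unfolding lifts_def kernel_to_def by auto
  moreover have jk0: "j \<le> k0" and k0J: "k0 \<notin> J"
    using jk k0 unfolding above_interval_def by auto
  have mj: "m (s, j) \<in> V (s, j)" and killed: "F (s, j) (s, k0) (m (s, j)) = 0"
    using kB_generatorsD(1)[OF m, of "(s, j)"] kB_generatorsD(3)[OF m, of "(s, j)" "(s, k0)"] j jk0 k0J
    by simp_all
  have "F (x, k0) (s, k0) 0 = F (s, j) (s, k0) (m (s, j))"
    using F_zero[of "(x, k0)" "(s, k0)"] x killed by simp
  then obtain v where "v \<in> kernel_to (x, j) (x, k0)" "F (x, j) (s, j) v = m (s, j)"
    using middle_exact_lift[OF x jk0 subspace_0[OF subspace_V] mj] unfolding kernel_to_def by blast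
  ultimately show ?thesis
    using coset_fibre[OF lin_F subspace_V kernel_to_coset] jk0 x by simp
qed

lemma lifts_compatible:
  assumes J: "interval J" and m: "kB_generators ({s} \<times> UNIV) ({s} \<times> J) V F m"
    and p: "snd p \<in> J" and q: "fst q \<le> s" "snd q \<in> J" and pq: "p \<le> q"
  shows "F p q ` lifts s J m p \<subseteq> lifts s J m q"
proof
  fix y assume "y \<in> F p q ` lifts s J m p"
  then obtain v where v: "v \<in> V p" "F p (s, snd p) v = m (s, snd p)"
    "\<And>k. k \<in> above_interval J \<Longrightarrow> F p (fst p, k) v = 0" and y: "y = F p q v"
    unfolding lifts_def by blast
  have ps: "p \<le> (s, snd p)" and ss: "(s, snd p) \<le> (s, snd q)" and qs: "q \<le> (s, snd q)"
    using pq q by (auto simp: less_eq_prod_def)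
  have "F q (s, snd q) y = F p (s, snd q) v" using F_comp[OF pq qs v(1)] y by simp
  also have "\<dots> = F (s, snd p) (s, snd q) (m (s, snd p))"
    using F_comp[OF ps ss v(1)] v(2) by simp
  also have "\<dots> = m (s, snd q)" using kB_generatorsD(3)[OF m _ _ _ ss] p q(2) by simp
  finally have y_lift: "F q (s, snd q) y = m (s, snd q)" .
  have y_killed: "F q (fst q, k) y = 0" if k: "k \<in> above_interval J" for k
  proof -
    have qk: "q \<le> (fst q, k)" and pk: "p \<le> (fst p, k)" and kk: "(fst p, k) \<le> (fst q, k)"
      using above_interval_ge[OF J k q(2)] above_interval_ge[OF J k p] pq
      by (auto simp: less_eq_prod_def)
    have "F q (fst q, k) y = F p (fst q, k) v" using F_comp[OF pq qk v(1)] y by simp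
    also have "\<dots> = F (fst p, k) (fst q, k) (F p (fst p, k) v)" using F_comp[OF pk kk v(1)] by simp
    also have "\<dots> = 0" using v(3)[OF k] F_zero[OF kk] by simp
    finally show ?thesis .
  qed
  have "y \<in> V q" using F_closed[OF pq v(1)] y by simp
  then show "y \<in> lifts s J m q" unfolding lifts_def using y_lift y_killed by simp
qed

lemma lifts_compatible_family:
  assumes J: "interval J" and bound: "\<exists>u. u \<notin> J \<and> (\<forall>j\<in>J. j \<le> u)"
    and m: "kB_generators ({s} \<times> UNIV) ({s} \<times> J) V F m"
  shows "\<exists>n. \<forall>p\<in>{..s} \<times> J. n p \<in> lifts s J m p \<and>
    (\<forall>q\<in>{..s} \<times> J. p \<le> q \<longrightarrow> F p q (n p) = n q)"
proof -
  have K: "above_interval J \<noteq> {}"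
    using bound J unfolding above_interval_def interval_def by blast
  let ?I = "{..s} \<times> J"
  interpret S: affine_inverse_system sc ?I V F
  proof (rule affine_inverse_system_on)
    fix p q assume "p \<in> ?I" "q \<in> ?I"
    moreover have "min a b \<in> J" if "a \<in> J" "b \<in> J" for a b
      using that by (simp add: min_def)
    ultimately show "\<exists>r\<in>?I. r \<le> p \<and> r \<le> q"
      by (intro bexI[of _ "(min (fst p) (fst q), min (snd p) (snd q))"])
        (auto simp: less_eq_prod_def min.coboundedI1)
  qed
  have "S.coset_system (lifts s J m)"
    unfolding S.coset_system_def
  proof (intro conjI ballI impI)
    fix p assume "p \<in> ?I"
    then obtain x j where "p = (x, j)" "x \<le> s" "j \<in> J" by auto
    then show "coset (V p) (lifts s J m p)" using lifts_coset[OF J K m] by simp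
  next
    fix p q assume p: "p \<in> ?I" and q: "q \<in> ?I" and pq: "p \<le> q"
    show "F p q ` lifts s J m p \<subseteq> lifts s J m q"
      by (rule lifts_compatible[OF J m _ _ _ pq]) (use p q in auto)
  qed
  then show ?thesis by (rule S.coset_system_compatible_point)
qed

lemma lifts_top:
  assumes "v \<in> lifts s J m (s, j)"
  shows "v = m (s, j)"
proof -
  have "v \<in> V (s, j)" "F (s, j) (s, j) v = m (s, j)"
    using assms unfolding lifts_def by simp_all
  then show ?thesis using F_id by simp
qed

lemma lifts_family_kB_generators:
  assumes m: "kB_generators ({s} \<times> UNIV) ({s} \<times> J) V F m"
    and n: "\<forall>p\<in>{..s} \<times> J. n p \<in> lifts s J m p \<and>
      (\<forall>q\<in>{..s} \<times> J. p \<le> q \<longrightarrow> F p q (n p) = n q)"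
  shows "kB_generators ({..s} \<times> UNIV) ({..s} \<times> J) V F n"
  unfolding kB_generators_def
proof (intro ballI conjI impI)
  fix p assume "p \<in> ({..s} \<times> UNIV) \<inter> ({..s} \<times> J)"
  then obtain x j where p: "p = (x, j)" "x \<le> s" "j \<in> J" and pI: "p \<in> {..s} \<times> J" by auto
  have "n p \<in> lifts s J m (x, j)" using bspec[OF n pI] p(1) by simp
  then have np: "n p \<in> V p" "F p (s, j) (n p) = m (s, j)"
    "\<And>k. k \<in> above_interval J \<Longrightarrow> F p (x, k) (n p) = 0"
    unfolding lifts_def using p(1) by simp_all
  show "n p \<in> V p" by (rule np(1))
  have "m (s, j) \<noteq> 0" using kB_generatorsD(2)[OF m, of "(s, j)"] p(3) by simp
  then show "n p \<noteq> 0" using np(2) F_zero[of p "(s, j)"] p by auto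
  fix q assume q: "q \<in> {..s} \<times> UNIV" and pq: "p \<le> q"
  show "F p q (n p) = (if q \<in> {..s} \<times> J then n q else 0)"
  proof (cases "q \<in> {..s} \<times> J")
    case True
    then show ?thesis using bspec[OF conjunct2[OF bspec[OF n pI]] True] pq by simp
  next
    case False
    obtain x' k where q': "q = (x', k)" "x' \<le> s" using q by auto
    then have k: "k \<in> above_interval J"
      using False p pq unfolding above_interval_def by auto
    have pk: "p \<le> (x, k)" and kq: "(x, k) \<le> q" using pq p q' by auto
    have "F p q (n p) = F (x, k) q (F p (x, k) (n p))"
      using F_comp[OF pk kq np(1)] by simp
    also have "\<dots> = 0" using np(3)[OF k] F_zero[OF kq] by simp
    finally show ?thesis using False by simp
  qed
qed

lemma kB_generators_extend:
  assumes J: "interval J" and bound: "\<exists>u. u \<notin> J \<and> (\<forall>j\<in>J. j \<le> u)"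
    and m: "kB_generators ({s} \<times> UNIV) ({s} \<times> J) V F m"
  shows "\<exists>n. kB_generators ({..s} \<times> UNIV) ({..s} \<times> J) V F n \<and> (\<forall>j\<in>J. n (s, j) = m (s, j))"
proof -
  from lifts_compatible_family[OF J bound m] obtain n
    where n: "\<forall>p\<in>{..s} \<times> J. n p \<in> lifts s J m p \<and>
      (\<forall>q\<in>{..s} \<times> J. p \<le> q \<longrightarrow> F p q (n p) = n q)" ..
  have "n (s, j) = m (s, j)" if "j \<in> J" for j
  proof -
    have "(s, j) \<in> {..s} \<times> J" using that by simp
    then show ?thesis using lifts_top conjunct1[OF bspec[OF n]] by blast
  qed
  then show ?thesis using lifts_family_kB_generators[OF m n] by blast
qed

lemma pmono_kB_extend_first:
  assumes J: "interval J" and bound: "\<exists>u. u \<notin> J \<and> (\<forall>j\<in>J. j \<le> u)"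
    and h: "pmono (*) sc ({s} \<times> UNIV) (kB_sp ({s} \<times> J)) (kB_map ({s} \<times> J)) V F h"
  shows "\<exists>g. pmono (*) sc ({..s} \<times> UNIV) (kB_sp ({..s} \<times> J)) (kB_map ({..s} \<times> J)) V F g \<and>
    (\<forall>p\<in>{s} \<times> UNIV. \<forall>x\<in>kB_sp ({s} \<times> J) p. g p x = h p x)"
proof -
  from kB_generators_extend[OF J bound pmono_kB_generators[OF h]] obtain n
    where n: "kB_generators ({..s} \<times> UNIV) ({..s} \<times> J) V F n"
      and n_h: "\<forall>j\<in>J. n (s, j) = h (s, j) 1"
    by (elim exE conjE)
  let ?g = "\<lambda>p c. if p \<in> {..s} \<times> J then sc c (n p) else 0"
  have "pmono (*) sc ({..s} \<times> UNIV) (kB_sp ({..s} \<times> J)) (kB_map ({..s} \<times> J)) V F ?g"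
    by (rule kB_generators_pmono[OF pmodule_on n])
  moreover have "?g p x = h p x" if p: "p \<in> {s} \<times> UNIV" and x: "x \<in> kB_sp ({s} \<times> J) p" for p x
  proof (cases "p \<in> {s} \<times> J")
    case True
    then show ?thesis using n_h pmono_kB_scale[OF h p True, of x] by auto
  next
    case False
    then show ?thesis using x pmono_kB_zero[OF h p] p unfolding kB_sp_def by auto
  qed
  ultimately show ?thesis by blast
qed

lemma middle_exact_module_swap: "middle_exact_module sc (\<lambda>p. V (prod.swap p)) (\<lambda>p q. F (prod.swap p) (prod.swap q))"
  using pmodule_swap[OF pmodule] pfd_swap[OF pfd] middle_exact_swap[OF middle_exact]
  by unfold_locales simp_all

lemma pmono_kB_extend_second:
  assumes J: "interval J" and bound: "\<exists>u. u \<notin> J \<and> (\<forall>j\<in>J. j \<le> u)"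
    and h: "pmono (*) sc (UNIV \<times> {t}) (kB_sp (J \<times> {t})) (kB_map (J \<times> {t})) V F h"
  shows "\<exists>g. pmono (*) sc (UNIV \<times> {..t}) (kB_sp (J \<times> {..t})) (kB_map (J \<times> {..t})) V F g \<and>
    (\<forall>p\<in>UNIV \<times> {t}. \<forall>x\<in>kB_sp (J \<times> {t}) p. g p x = h p x)"
proof -
  interpret T: middle_exact_module sc "\<lambda>p. V (prod.swap p)" "\<lambda>p q. F (prod.swap p) (prod.swap q)"
    by (rule middle_exact_module_swap)
  have "pmono (*) sc ({t} \<times> UNIV) (kB_sp ({t} \<times> J)) (kB_map ({t} \<times> J))
      (\<lambda>p. V (prod.swap p)) (\<lambda>p q. F (prod.swap p) (prod.swap q)) (\<lambda>p. h (prod.swap p))"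
    using iffD2[OF pmono_kB_swap h] by (simp only: product_swap)
  from T.pmono_kB_extend_first[OF J bound this] obtain g where
    g: "pmono (*) sc ({..t} \<times> UNIV) (kB_sp ({..t} \<times> J)) (kB_map ({..t} \<times> J))
      (\<lambda>p. V (prod.swap p)) (\<lambda>p q. F (prod.swap p) (prod.swap q)) g"
    and gh: "\<forall>p\<in>{t} \<times> UNIV. \<forall>x\<in>kB_sp ({t} \<times> J) p. g p x = h (prod.swap p) x"
    by (elim exE conjE)
  have "pmono (*) sc (prod.swap ` (UNIV \<times> {..t})) (kB_sp (prod.swap ` (J \<times> {..t})))
      (kB_map (prod.swap ` (J \<times> {..t}))) (\<lambda>p. V (prod.swap p))
      (\<lambda>p q. F (prod.swap p) (prod.swap q)) (\<lambda>p. g (prod.swap (prod.swap p)))"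
    using g by (simp only: product_swap swap_swap)
  then have "pmono (*) sc (UNIV \<times> {..t}) (kB_sp (J \<times> {..t})) (kB_map (J \<times> {..t})) V F
      (\<lambda>p. g (prod.swap p))"
    by (rule iffD1[OF pmono_kB_swap])
  moreover have "g (prod.swap p) x = h p x"
    if "p \<in> UNIV \<times> {t}" "x \<in> kB_sp (J \<times> {t}) p" for p x
    using gh[rule_format, of "prod.swap p" x] that by (auto simp: kB_sp_def)
  ultimately show ?thesis by blast
qed

end

theorem lemma5p4:
  fixes sc :: "'k::field \<Rightarrow> 'v::ab_group_add \<Rightarrow> 'v"
    and V :: "('a::linorder \<times> 'b::linorder) \<Rightarrow> 'v set"
    and F :: "'a \<times> 'b \<Rightarrow> 'a \<times> 'b \<Rightarrow> 'v \<Rightarrow> 'v"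
    and s :: 'a and t :: 'b and JS :: "'a set" and JT :: "'b set"
  assumes M: "pmodule sc UNIV V F"
    and pfd: "pfd sc UNIV V"
    and mex: "middle_exact sc V F"
    and JS: "interval JS" and JT: "interval JT"
  shows
   "((\<exists>u. u \<notin> JT \<and> (\<forall>j\<in>JT. j \<le> u)) \<longrightarrow>
      (\<forall>h. pmono (*) sc ({s} \<times> UNIV) (kB_sp ({s} \<times> JT)) (kB_map ({s} \<times> JT)) V F h \<longrightarrow>
        (\<exists>g. pmono (*) sc ({..s} \<times> UNIV) (kB_sp ({..s} \<times> JT)) (kB_map ({..s} \<times> JT)) V F g \<and>
             (\<forall>p\<in>{s} \<times> UNIV. \<forall>x\<in>kB_sp ({s} \<times> JT) p. g p x = h p x))))
    \<and>
    ((\<exists>u. u \<notin> JS \<and> (\<forall>j\<in>JS. j \<le> u)) \<longrightarrow>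
      (\<forall>h. pmono (*) sc (UNIV \<times> {t}) (kB_sp (JS \<times> {t})) (kB_map (JS \<times> {t})) V F h \<longrightarrow>
        (\<exists>g. pmono (*) sc (UNIV \<times> {..t}) (kB_sp (JS \<times> {..t})) (kB_map (JS \<times> {..t})) V F g \<and>
             (\<forall>p\<in>UNIV \<times> {t}. \<forall>x\<in>kB_sp (JS \<times> {t}) p. g p x = h p x))))"
proof -
  interpret middle_exact_module sc V F
    by unfold_locales (fact M pfd mex)+
  show ?thesis
    using pmono_kB_extend_first[OF JT] pmono_kB_extend_second[OF JS] by blast
qed

end
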